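(* Let $R=\nabla\vdash l\to r$ be a standard nominal rule. Then $\mathcal{T}(\nabla,l)\Rightarrow\mathcal{T}(\nabla,r)$ is a CRS rule.
   Context: Nominal terms: $s,t ::= a \mid \pi\cdot X \mid [a]s \mid f\,s \mid (s_1,\ldots,s_n)$ over atoms, variables, function symbols with arities and finite-support permutations $\pi$ of atoms. A freshness context is a set of constraints $a\#X$. A nominal rule $\nabla\vdash l\to r$ has all variables of $r$ and $\nabla$ occurring in $l$. $\nabla\vdash t$ is closed if: (1) every atom occurrence $a$ in $t$ lies under an abstraction $[a]$; (2) if $\pi\cdot X$ is in the scope of an abstraction of $\pi(a)$ then every occurrence $\pi'\cdot X$ of $X$ in $t$ is in the scope of an abstraction of $\pi'(a)$, or $a\#X\in\nabla$; (3) for two occurrences $\pi_1\cdot X,\pi_2\cdot X$ and $a$ with $\pi_1(a)\neq\pi_2(a)$, if $a$ is not abstracted in one of the occurrences then $a\#X\in\nabla$. A rule is standard if $\nabla\vdash(l,r)$ is closed and $l$ has the form $f\,s$. CRS: meta-terms $a\mid Z(t_1,\dots,t_n)\mid[a]t\mid f\,t\mid(t_1,\dots,t_n)$ with meta-variables of fixed arity; a CRS rule is a pair $l\Rightarrow r$ of closed meta-terms (no free variables) with $l=f(s_1,\dots,s_n)$, all meta-variables of $r$ occurring in $l$, and meta-variables in $l$ occurring only in the form $Z(a_1,\dots,a_n)$ with $a_1,\dots,a_n$ pairwise distinct bound variables. Translation: $\Lambda_t(X)$ is the set of atoms $a$ such that some occurrence of $X$ in $t$ is in the scope of $[a]$.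 With a fixed total order on atoms, $\mathcal{T}(\nabla,t)$ is obtained from $t$ by replacing each occurrence $\pi\cdot X$ by $X(\pi\cdot xs)$, where $xs$ is the ascending list of $\{\pi^{-1}(a)\mid a\in\Lambda_t(X)\}\setminus\{a\mid a\#X\in\nabla\}$ and $\pi$ is applied elementwise; other constructs kept unchanged. In $\mathcal{T}(\nabla,l)$, $\Lambda_l$ is used, and in $\mathcal{T}(\nabla,r)$, $\Lambda_r$. *)

theory Defs
  imports Main "HOL-Combinatorics.Perm"
begin

datatype ('a, 'v, 'f) nterm =
    NAtom 'a
  | NSusp "'a perm" 'v
  | NAbs 'a "('a, 'v, 'f) nterm"
  | NFun 'f "('a, 'v, 'f) nterm"
  | NTup "('a, 'v, 'f) nterm list"

type_synonym ('a, 'v) fresh_ctx = "('a \<times> 'v) set"   (* (a, X) \<in> Nab means a # X *)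

primrec susp_occs :: "('a, 'v, 'f) nterm \<Rightarrow> ('a set \<times> 'a perm \<times> 'v) set" where
  "susp_occs (NAtom a) = {}"
| "susp_occs (NSusp \<pi> X) = {({}, \<pi>, X)}"
| "susp_occs (NAbs a t) = (\<lambda>(B, \<pi>, X). (insert a B, \<pi>, X)) ` susp_occs t"
| "susp_occs (NFun f t) = susp_occs t"
| "susp_occs (NTup ts) = \<Union> (set (map susp_occs ts))"

primrec atom_occs :: "('a, 'v, 'f) nterm \<Rightarrow> ('a set \<times> 'a) set" where
  "atom_occs (NAtom a) = {({}, a)}"
| "atom_occs (NSusp \<pi> X) = {}"
| "atom_occs (NAbs a t) = (\<lambda>(B, b). (insert a B, b)) ` atom_occs t"
| "atom_occs (NFun f t) = atom_occs t"
| "atom_occs (NTup ts) = \<Union> (set (map atom_occs ts))"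

definition nvars :: "('a, 'v, 'f) nterm \<Rightarrow> 'v set" where
  "nvars t = {X. \<exists>B \<pi>. (B, \<pi>, X) \<in> susp_occs t}"

definition Lam :: "('a, 'v, 'f) nterm \<Rightarrow> 'v \<Rightarrow> 'a set" where
  "Lam t X = {a. \<exists>B \<pi>. (B, \<pi>, X) \<in> susp_occs t \<and> a \<in> B}"

definition nclosed :: "('a, 'v) fresh_ctx \<Rightarrow> ('a, 'v, 'f) nterm \<Rightarrow> bool" where
  "nclosed Nab t \<longleftrightarrow>
     (\<forall>(B, a) \<in> atom_occs t. a \<in> B) \<and>
     (\<forall>(B, \<pi>, X) \<in> susp_occs t. \<forall>a. Perm.apply (\<pi>) a \<in> B \<longrightarrow>
        (\<forall>(B', \<pi>', X') \<in> susp_occs t. X' = X \<longrightarrow> Perm.apply (\<pi>') a \<in> B') \<or> (a, X) \<in> Nab) \<and>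
     (\<forall>(B1, \<pi>1, X1) \<in> susp_occs t. \<forall>(B2, \<pi>2, X2) \<in> susp_occs t. \<forall>a.
        X1 = X2 \<and> Perm.apply (\<pi>1) a \<noteq> Perm.apply (\<pi>2) a \<and> (Perm.apply (\<pi>1) a \<notin> B1 \<or> Perm.apply (\<pi>2) a \<notin> B2)
        \<longrightarrow> (a, X1) \<in> Nab)"

definition nominal_rule :: "('a, 'v) fresh_ctx \<Rightarrow> ('a, 'v, 'f) nterm \<Rightarrow> ('a, 'v, 'f) nterm \<Rightarrow> bool" where
  "nominal_rule Nab l r \<longleftrightarrow> nvars r \<subseteq> nvars l \<and> snd ` Nab \<subseteq> nvars l"

definition standard_rule :: "('a, 'v) fresh_ctx \<Rightarrow> ('a, 'v, 'f) nterm \<Rightarrow> ('a, 'v, 'f) nterm \<Rightarrow> bool" where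
  "standard_rule Nab l r \<longleftrightarrow> nominal_rule Nab l r \<and> nclosed Nab (NTup [l, r]) \<and> (\<exists>f s. l = NFun f s)"

datatype ('a, 'v, 'f) mterm =
    MAtom 'a
  | MVar 'v "('a, 'v, 'f) mterm list"
  | MAbs 'a "('a, 'v, 'f) mterm"
  | MFun 'f "('a, 'v, 'f) mterm"
  | MTup "('a, 'v, 'f) mterm list"

primrec matom_occs :: "('a, 'v, 'f) mterm \<Rightarrow> ('a set \<times> 'a) set" where
  "matom_occs (MAtom a) = {({}, a)}"
| "matom_occs (MVar Z ts) = \<Union> (set (map matom_occs ts))"
| "matom_occs (MAbs a t) = (\<lambda>(B, b). (insert a B, b)) ` matom_occs t"
| "matom_occs (MFun f t) = matom_occs t"
| "matom_occs (MTup ts) = \<Union> (set (map matom_occs ts))"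

primrec mvar_occs :: "('a, 'v, 'f) mterm \<Rightarrow> ('a set \<times> 'v \<times> ('a, 'v, 'f) mterm list) set" where
  "mvar_occs (MAtom a) = {}"
| "mvar_occs (MVar Z ts) = insert ({}, Z, ts) (\<Union> (set (map mvar_occs ts)))"
| "mvar_occs (MAbs a t) = (\<lambda>(B, Z, ts). (insert a B, Z, ts)) ` mvar_occs t"
| "mvar_occs (MFun f t) = mvar_occs t"
| "mvar_occs (MTup ts) = \<Union> (set (map mvar_occs ts))"

definition mvars :: "('a, 'v, 'f) mterm \<Rightarrow> 'v set" where
  "mvars t = {Z. \<exists>B ts. (B, Z, ts) \<in> mvar_occs t}"

definition mclosed :: "('a, 'v, 'f) mterm \<Rightarrow> bool" where
  "mclosed t \<longleftrightarrow> (\<forall>(B, a) \<in> matom_occs t. a \<in> B)"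

definition crs_rule :: "('a, 'v, 'f) mterm \<Rightarrow> ('a, 'v, 'f) mterm \<Rightarrow> bool" where
  "crs_rule l r \<longleftrightarrow>
     mclosed l \<and> mclosed r \<and>
     (\<exists>f s. l = MFun f s) \<and>
     mvars r \<subseteq> mvars l \<and>
     (\<forall>(B, Z, ts) \<in> mvar_occs l. \<exists>as. ts = map MAtom as \<and> distinct as \<and> set as \<subseteq> B) \<and>
     (\<comment> \<open>fixed arity of meta-variables\<close>
      \<forall>(B1, Z1, ts1) \<in> mvar_occs l \<union> mvar_occs r. \<forall>(B2, Z2, ts2) \<in> mvar_occs l \<union> mvar_occs r.
        Z1 = Z2 \<longrightarrow> length ts1 = length ts2)"

primrec trans_aux :: "('v \<Rightarrow> 'a::linorder set) \<Rightarrow> ('a, 'v) fresh_ctx \<Rightarrow> ('a, 'v, 'f) nterm \<Rightarrow> ('a, 'v, 'f) mterm" where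
  "trans_aux L Nab (NAtom a) = MAtom a"
| "trans_aux L Nab (NSusp \<pi> X) =
     MVar X (map (\<lambda>b. MAtom (Perm.apply (\<pi>) b))
       (sorted_list_of_set ((\<lambda>a. Perm.apply (inverse \<pi>) a) ` L X - {a. (a, X) \<in> Nab})))"
| "trans_aux L Nab (NAbs a t) = MAbs a (trans_aux L Nab t)"
| "trans_aux L Nab (NFun f t) = MFun f (trans_aux L Nab t)"
| "trans_aux L Nab (NTup ts) = MTup (map (trans_aux L Nab) ts)"

definition translate :: "('a::linorder, 'v) fresh_ctx \<Rightarrow> ('a, 'v, 'f) nterm \<Rightarrow> ('a, 'v, 'f) mterm" where
  "translate Nab t = trans_aux (Lam t) Nab t"

end

theory Submission
  imports Defs
begin

text \<open>
  For a variable \<open>X\<close> of a closed \<open>\<nabla> \<turnstile> t\<close>, condition (3) forces all suspensions of \<open>X\<close>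
  to agree on every atom that is neither fresh for \<open>X\<close> nor abstracted at both occurrences.
  Together with condition (2) this shows that the argument atoms of an occurrence \<open>\<pi> \<cdot> X\<close>,
  namely \<open>\<pi>\<^sup>-\<^sup>1 \<cdot> \<Lambda>\<^sub>t(X)\<close> without the atoms fresh for \<open>X\<close>, are exactly the non-fresh
  atoms \<open>a\<close> with \<open>\<pi>(a)\<close> abstracted above that occurrence, and that this set does not depend
  on the occurrence.  Hence the meta-variable \<open>X\<close> receives pairwise distinct (\<open>\<pi>\<close> is
  injective) bound atoms as arguments, always the same number of them, and atoms of the rule
  stay bound by (1).
\<close>

definition susp_args ::
    "('v \<Rightarrow> 'a::linorder set) \<Rightarrow> ('a, 'v) fresh_ctx \<Rightarrow> 'a perm \<Rightarrow> 'v \<Rightarrow> 'a list" where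
  "susp_args L Nab \<pi> X =
     sorted_list_of_set ((\<lambda>a. Perm.apply (inverse \<pi>) a) ` L X - {a. (a, X) \<in> Nab})"

definition abstracted_args :: "('a, 'v) fresh_ctx \<Rightarrow> 'a set \<Rightarrow> 'a perm \<Rightarrow> 'v \<Rightarrow> 'a set" where
  "abstracted_args Nab B \<pi> X = {a. (a, X) \<notin> Nab \<and> Perm.apply \<pi> a \<in> B}"

lemma mvar_occs_trans_aux:
  "(B, Z, ts) \<in> mvar_occs (trans_aux L Nab t) \<longleftrightarrow>
   (\<exists>\<pi>. (B, \<pi>, Z) \<in> susp_occs t \<and> ts = map (\<lambda>b. MAtom (Perm.apply \<pi> b)) (susp_args L Nab \<pi> Z))"
proof (induction t arbitrary: B)
  case (NAbs a t)
  then show ?case by (auto simp: image_iff Bex_def; force)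
qed (auto simp: susp_args_def)

lemma matom_occs_trans_aux:
  "(B, c) \<in> matom_occs (trans_aux L Nab t) \<longleftrightarrow>
   (B, c) \<in> atom_occs t \<or>
   (\<exists>\<pi> X. (B, \<pi>, X) \<in> susp_occs t \<and> c \<in> Perm.apply \<pi> ` set (susp_args L Nab \<pi> X))"
proof (induction t arbitrary: B)
  case (NAbs a t)
  then show ?case by (auto simp: image_iff Bex_def; force)
next
  case (NTup ts)
  then show ?case by auto blast
qed (auto simp: susp_args_def)

lemma mvars_trans_aux: "mvars (trans_aux L Nab t) = nvars t"
  unfolding mvars_def nvars_def mvar_occs_trans_aux by blast

lemma nclosed_atom_abstracted:
  assumes "nclosed Nab t" "(B, a) \<in> atom_occs t"
  shows "a \<in> B"
  using assms unfolding nclosed_def by (auto dest: bspec)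

lemma nclosed_abstracted_everywhere:
  assumes "nclosed Nab t" "(B, \<pi>, X) \<in> susp_occs t" "Perm.apply \<pi> a \<in> B"
    and "(B', \<pi>', X) \<in> susp_occs t"
  shows "Perm.apply \<pi>' a \<in> B' \<or> (a, X) \<in> Nab"
proof -
  have "\<forall>(B, \<pi>, X) \<in> susp_occs t. \<forall>a. Perm.apply \<pi> a \<in> B \<longrightarrow>
      (\<forall>(B', \<pi>', X') \<in> susp_occs t. X' = X \<longrightarrow> Perm.apply \<pi>' a \<in> B') \<or> (a, X) \<in> Nab"
    using assms(1) unfolding nclosed_def by (elim conjE)
  then show ?thesis using assms(2-4) by (auto dest!: bspec)
qed

lemma nclosed_susp_agree:
  assumes "nclosed Nab t" "(B1, \<pi>1, X) \<in> susp_occs t" "(B2, \<pi>2, X) \<in> susp_occs t"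
    and "(a, X) \<notin> Nab" "Perm.apply \<pi>1 a \<notin> B1"
  shows "Perm.apply \<pi>1 a = Perm.apply \<pi>2 a"
proof -
  have "\<forall>(B1, \<pi>1, X1) \<in> susp_occs t. \<forall>(B2, \<pi>2, X2) \<in> susp_occs t. \<forall>a.
      X1 = X2 \<and> Perm.apply \<pi>1 a \<noteq> Perm.apply \<pi>2 a \<and> (Perm.apply \<pi>1 a \<notin> B1 \<or> Perm.apply \<pi>2 a \<notin> B2)
      \<longrightarrow> (a, X1) \<in> Nab"
    using assms(1) unfolding nclosed_def by (elim conjE)
  then have "Perm.apply \<pi>1 a \<noteq> Perm.apply \<pi>2 a \<and> Perm.apply \<pi>1 a \<notin> B1 \<longrightarrow> (a, X) \<in> Nab"
    using assms(2,3) by fast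
  then show ?thesis using assms(4,5) by blast
qed

lemma abstracted_args_uniform:
  assumes "nclosed Nab t" "(B1, \<pi>1, X) \<in> susp_occs t" "(B2, \<pi>2, X) \<in> susp_occs t"
  shows "abstracted_args Nab B1 \<pi>1 X = abstracted_args Nab B2 \<pi>2 X"
proof -
  have "Perm.apply \<pi>2 a \<in> B2" if "(a, X) \<notin> Nab" "Perm.apply \<pi>1 a \<in> B1" for a
    using nclosed_abstracted_everywhere[OF assms(1,2) that(2) assms(3)] that(1) by blast
  moreover have "Perm.apply \<pi>1 a \<in> B1" if "(a, X) \<notin> Nab" "Perm.apply \<pi>2 a \<in> B2" for a
    using nclosed_abstracted_everywhere[OF assms(1,3) that(2) assms(2)] that(1) by blast
  ultimately show ?thesis unfolding abstracted_args_def by blast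
qed

lemma apply_inverse_eq_iff: "Perm.apply (inverse \<pi>) b = a \<longleftrightarrow> b = Perm.apply \<pi> a"
  by (metis apply_inverse bij_apply bij_inv_eq_iff)

lemma Lam_args_eq_abstracted_args:
  assumes cl: "nclosed Nab t0" and sub: "susp_occs t \<subseteq> susp_occs t0"
    and occ: "(B, \<pi>, X) \<in> susp_occs t"
  shows "(\<lambda>a. Perm.apply (inverse \<pi>) a) ` Lam t X - {a. (a, X) \<in> Nab} = abstracted_args Nab B \<pi> X"
proof (intro equalityI subsetI)
  fix a assume "a \<in> (\<lambda>a. Perm.apply (inverse \<pi>) a) ` Lam t X - {a. (a, X) \<in> Nab}"
  then obtain c B' \<pi>' where a: "a = Perm.apply (inverse \<pi>) c" and c: "c \<in> B'"
    and occ': "(B', \<pi>', X) \<in> susp_occs t" and fresh: "(a, X) \<notin> Nab"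
    unfolding Lam_def by blast
  have abs': "Perm.apply \<pi> a \<in> B'" using a c by (metis apply_inverse_eq_iff)
  have occ0: "(B, \<pi>, X) \<in> susp_occs t0" "(B', \<pi>', X) \<in> susp_occs t0"
    using occ occ' sub by auto
  show "a \<in> abstracted_args Nab B \<pi> X"
  proof (rule ccontr)
    assume "a \<notin> abstracted_args Nab B \<pi> X"
    then have nB: "Perm.apply \<pi> a \<notin> B" using fresh unfolding abstracted_args_def by blast
    then have "Perm.apply \<pi>' a \<in> B'"
      using nclosed_susp_agree[OF cl occ0 fresh nB] abs' by simp
    then show False
      using nclosed_abstracted_everywhere[OF cl occ0(2) _ occ0(1)] fresh nB by blast
  qed
next
  fix a assume "a \<in> abstracted_args Nab B \<pi> X"
  moreover have "a = Perm.apply (inverse \<pi>) (Perm.apply \<pi> a)"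
    by (metis apply_inverse_eq_iff)
  ultimately show "a \<in> (\<lambda>a. Perm.apply (inverse \<pi>) a) ` Lam t X - {a. (a, X) \<in> Nab}"
    using occ unfolding abstracted_args_def Lam_def by blast
qed

lemma mvar_occs_translate:
  assumes "nclosed Nab t0" "susp_occs t \<subseteq> susp_occs t0"
    and "(B, Z, ts) \<in> mvar_occs (translate Nab t)"
  obtains \<pi> where "(B, \<pi>, Z) \<in> susp_occs t"
    and "ts = map (\<lambda>b. MAtom (Perm.apply \<pi> b)) (sorted_list_of_set (abstracted_args Nab B \<pi> Z))"
proof -
  from assms(3) obtain \<pi> where occ: "(B, \<pi>, Z) \<in> susp_occs t"
    and "ts = map (\<lambda>b. MAtom (Perm.apply \<pi> b)) (susp_args (Lam t) Nab \<pi> Z)"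
    unfolding translate_def mvar_occs_trans_aux by blast
  with that show thesis
    using Lam_args_eq_abstracted_args[OF assms(1,2) occ] by (simp add: susp_args_def)
qed

lemma set_sorted_list_of_set_subset: "set (sorted_list_of_set S) \<subseteq> S"
  by (cases "finite S") auto

lemma mclosed_translate:
  assumes cl: "nclosed Nab t0"
    and sub: "susp_occs t \<subseteq> susp_occs t0" and sub_atoms: "atom_occs t \<subseteq> atom_occs t0"
  shows "mclosed (translate Nab t)"
  unfolding mclosed_def
proof clarify
  fix B c assume "(B, c) \<in> matom_occs (translate Nab t)"
  then consider "(B, c) \<in> atom_occs t"
    | \<pi> X where "(B, \<pi>, X) \<in> susp_occs t" "c \<in> Perm.apply \<pi> ` set (susp_args (Lam t) Nab \<pi> X)"
    unfolding translate_def matom_occs_trans_aux by blast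
  then show "c \<in> B"
  proof cases
    case 1
    then show ?thesis using nclosed_atom_abstracted[OF cl] sub_atoms by blast
  next
    case 2
    then show ?thesis
      using Lam_args_eq_abstracted_args[OF cl sub 2(1)]
        set_sorted_list_of_set_subset[of "abstracted_args Nab B \<pi> X"]
      unfolding susp_args_def abstracted_args_def by auto
  qed
qed

lemma translate_pattern_args:
  assumes "nclosed Nab t0" "susp_occs t \<subseteq> susp_occs t0"
    and "(B, Z, ts) \<in> mvar_occs (translate Nab t)"
  shows "\<exists>as. ts = map MAtom as \<and> distinct as \<and> set as \<subseteq> B"
proof -
  obtain \<pi> where ts: "ts = map (\<lambda>b. MAtom (Perm.apply \<pi> b)) (sorted_list_of_set (abstracted_args Nab B \<pi> Z))"
    using mvar_occs_translate[OF assms] by blast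
  let ?as = "map (Perm.apply \<pi>) (sorted_list_of_set (abstracted_args Nab B \<pi> Z))"
  have "set ?as \<subseteq> B"
    using set_sorted_list_of_set_subset[of "abstracted_args Nab B \<pi> Z"]
    unfolding abstracted_args_def by auto
  moreover have "distinct ?as" by (simp add: distinct_map apply_inj inj_on_def)
  ultimately show ?thesis using ts by (intro exI[of _ ?as]) (simp add: comp_def)
qed

lemma translate_arity_uniform:
  assumes cl: "nclosed Nab t0"
    and sub1: "susp_occs t1 \<subseteq> susp_occs t0" and occ1: "(B1, Z, ts1) \<in> mvar_occs (translate Nab t1)"
    and sub2: "susp_occs t2 \<subseteq> susp_occs t0" and occ2: "(B2, Z, ts2) \<in> mvar_occs (translate Nab t2)"
  shows "length ts1 = length ts2"
proof -
  obtain \<pi>1 where o1: "(B1, \<pi>1, Z) \<in> susp_occs t1"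
    and ts1: "ts1 = map (\<lambda>b. MAtom (Perm.apply \<pi>1 b)) (sorted_list_of_set (abstracted_args Nab B1 \<pi>1 Z))"
    using mvar_occs_translate[OF cl sub1 occ1] by blast
  obtain \<pi>2 where o2: "(B2, \<pi>2, Z) \<in> susp_occs t2"
    and ts2: "ts2 = map (\<lambda>b. MAtom (Perm.apply \<pi>2 b)) (sorted_list_of_set (abstracted_args Nab B2 \<pi>2 Z))"
    using mvar_occs_translate[OF cl sub2 occ2] by blast
  show ?thesis
    using ts1 ts2 abstracted_args_uniform[OF cl o1[THEN subsetD[OF sub1]] o2[THEN subsetD[OF sub2]]]
    by simp
qed

theorem mainTheorem8:
  fixes Nab :: "('a::linorder, 'v) fresh_ctx"
    and l r :: "('a, 'v, 'f) nterm"
  assumes "standard_rule Nab l r"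
  shows "crs_rule (translate Nab l) (translate Nab r)"
proof -
  let ?t0 = "NTup [l, r]"
  have cl: "nclosed Nab ?t0" and vars: "nvars r \<subseteq> nvars l" and head: "\<exists>f s. l = NFun f s"
    using assms unfolding standard_rule_def nominal_rule_def by auto
  have sub: "susp_occs l \<subseteq> susp_occs ?t0" "susp_occs r \<subseteq> susp_occs ?t0"
    and sub_atoms: "atom_occs l \<subseteq> atom_occs ?t0" "atom_occs r \<subseteq> atom_occs ?t0"
    by auto
  have "mclosed (translate Nab l)" "mclosed (translate Nab r)"
    using mclosed_translate[OF cl] sub sub_atoms by auto
  moreover have "\<exists>f s. translate Nab l = MFun f s"
    using head unfolding translate_def by auto
  moreover have "mvars (translate Nab r) \<subseteq> mvars (translate Nab l)"
    using vars unfolding translate_def mvars_trans_aux .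
  moreover have "\<forall>(B, Z, ts) \<in> mvar_occs (translate Nab l). \<exists>as. ts = map MAtom as \<and> distinct as \<and> set as \<subseteq> B"
    using translate_pattern_args[OF cl sub(1)] by blast
  moreover have "\<forall>(B1, Z1, ts1) \<in> mvar_occs (translate Nab l) \<union> mvar_occs (translate Nab r).
      \<forall>(B2, Z2, ts2) \<in> mvar_occs (translate Nab l) \<union> mvar_occs (translate Nab r).
        Z1 = Z2 \<longrightarrow> length ts1 = length ts2"
    using translate_arity_uniform[OF cl] sub by blast
  ultimately show ?thesis unfolding crs_rule_def by blast
qed

end
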